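(* Let $W$ be a discrete memoryless channel with finite input alphabet $\mathcal{X}$ and finite output alphabet $\mathcal{Y}$, with reliability function $E(R)$ and with $\vartheta(\rho)$ as defined in the context. Then for every $\rho\ge 1$, $$E(R)\le 2\rho\,\vartheta(\rho)\qquad\text{for all } R>\vartheta(\rho),$$ and if the channel is pairwise reversible, then moreover $E(R)\le\rho\,\vartheta(\rho)$ for all $R>\vartheta(\rho)$.
   Context: $W(y|x)$ are the transition probabilities; $W^{(n)}(\bm{y}|\bm{x})=\prod_{i=1}^n W(y_i|x_i)$. A code of block-length $n$ is a set of $M$ codewords $\bm{x}_1,\ldots,\bm{x}_M\in\mathcal{X}^n$ with rate $R=\frac{1}{n}\log M$ (natural log); a decoder partitions $\mathcal{Y}^n$ into decoding sets $Y_1,\ldots,Y_M$; the error probability for message $m$ is $P_{e|m}=\sum_{\bm{y}\notin Y_m}W^{(n)}(\bm{y}|\bm{x}_m)$ and $P_{e,\max}=\max_m P_{e|m}$. $P^{(n)}_{e,\max}(R)$ is the smallest $P_{e,\max}$ over all codes (and decoders) of length $n$ and rate at least $R$, and the reliability function is $E(R)=\limsup_{n\to\infty}-\frac1n\log P^{(n)}_{e,\max}(R)$ (taken to be $+\infty$ when the error probability can be made zero). State vectors: $\bm{\psi}_x\in\mathbb{R}^{|\mathcal{Y}|}$ with $\bm{\psi}_x(y)=\sqrt{W(y|x)}$, so $\langle\bm{\psi}_x,\bm{\psi}_{x'}\rangle=\sum_y\sqrt{W(y|x)W(y|x')}$. For $\rho\ge1$, an orthonormal representation of degree $\rho$ is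 a family $\{\tilde{\bm{\psi}}_x\}_{x\in\mathcal{X}}$ of unit-norm vectors in some Hilbert space with $|\langle\tilde{\bm{\psi}}_x,\tilde{\bm{\psi}}_{x'}\rangle|\le(\langle\bm{\psi}_x,\bm{\psi}_{x'}\rangle)^{1/\rho}$ for all $x,x'$; $\Gamma(\rho)$ is the set of all such representations; $V(\{\tilde{\bm{\psi}}_x\})=\min_{\bm{f}}\max_x\log\frac{1}{|\langle\tilde{\bm{\psi}}_x,\bm{f}\rangle|^2}$ over unit vectors $\bm{f}$; and $\vartheta(\rho)=\min_{\{\tilde{\bm{\psi}}_x\}\in\Gamma(\rho)}V(\{\tilde{\bm{\psi}}_x\})$. The channel is called pairwise reversible if for every pair of inputs $x,x'$ the function $s\mapsto\sum_y W(y|x)^{1-s}W(y|x')^{s}$ on $[0,1]$ attains its minimum at $s=1/2$. *)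

theory Defs
  imports "HOL-Analysis.Analysis"
begin

text \<open>Channel: W x y stands for the transition probability W(y|x).\<close>

definition channel :: "('x::finite \<Rightarrow> 'y::finite \<Rightarrow> real) \<Rightarrow> bool" where
  "channel W \<longleftrightarrow> (\<forall>x y. 0 \<le> W x y) \<and> (\<forall>x. (\<Sum>y\<in>UNIV. W x y) = 1)"

definition Wn :: "('x \<Rightarrow> 'y \<Rightarrow> real) \<Rightarrow> 'x list \<Rightarrow> 'y list \<Rightarrow> real" where
  "Wn W xs ys = (\<Prod>i<length xs. W (xs ! i) (ys ! i))"

text \<open>A code of block length n with M messages: codewords c 0, ..., c (M-1) of length n,
  and a decoder dec mapping each output sequence of length n to a message in {0..<M}
  (i.e. the decoding sets Y_m = dec^-1(m) partition Y^n).\<close>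
definition is_code :: "nat \<Rightarrow> nat \<Rightarrow> (nat \<Rightarrow> 'x list) \<Rightarrow> ('y list \<Rightarrow> nat) \<Rightarrow> bool" where
  "is_code n M c dec \<longleftrightarrow> 1 \<le> M \<and> (\<forall>m<M. length (c m) = n) \<and>
     (\<forall>ys. length ys = n \<longrightarrow> dec ys < M)"

definition err_prob :: "('x \<Rightarrow> 'y::finite \<Rightarrow> real) \<Rightarrow> nat \<Rightarrow> (nat \<Rightarrow> 'x list)
    \<Rightarrow> ('y list \<Rightarrow> nat) \<Rightarrow> nat \<Rightarrow> real" where
  "err_prob W n c dec m = (\<Sum>ys\<in>{ys. length ys = n \<and> dec ys \<noteq> m}. Wn W (c m) ys)"

definition err_max :: "('x \<Rightarrow> 'y::finite \<Rightarrow> real) \<Rightarrow> nat \<Rightarrow> nat \<Rightarrow> (nat \<Rightarrow> 'x list)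
    \<Rightarrow> ('y list \<Rightarrow> nat) \<Rightarrow> real" where
  "err_max W n M c dec = Max ((\<lambda>m. err_prob W n c dec m) ` {..<M})"

definition opt_err :: "('x \<Rightarrow> 'y::finite \<Rightarrow> real) \<Rightarrow> nat \<Rightarrow> real \<Rightarrow> real" where
  "opt_err W n R = Inf {err_max W n M c dec | M c dec.
       is_code n M c dec \<and> ln (real M) / real n \<ge> R}"

definition reliability :: "('x \<Rightarrow> 'y::finite \<Rightarrow> real) \<Rightarrow> real \<Rightarrow> ereal" where
  "reliability W R = limsup (\<lambda>n. if opt_err W n R = 0 then \<infinity>
       else ereal (- ln (opt_err W n R) / real n))"

text \<open>Inner products of the state vectors psi_x(y) = sqrt(W(y|x)).\<close>
definition bhatt :: "('x \<Rightarrow> 'y::finite \<Rightarrow> real) \<Rightarrow> 'x \<Rightarrow> 'x \<Rightarrow> real" where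
  "bhatt W x x' = (\<Sum>y\<in>UNIV. sqrt (W x y * W x' y))"

text \<open>Complex Hilbert space C^|X| (coordinates indexed by the input alphabet).\<close>
definition cinner :: "('i::finite \<Rightarrow> complex) \<Rightarrow> ('i \<Rightarrow> complex) \<Rightarrow> complex" where
  "cinner u v = (\<Sum>i\<in>UNIV. cnj (u i) * v i)"

definition unit_vec :: "('i::finite \<Rightarrow> complex) \<Rightarrow> bool" where
  "unit_vec u \<longleftrightarrow> (\<Sum>i\<in>UNIV. (cmod (u i))\<^sup>2) = 1"

definition orth_rep :: "('x::finite \<Rightarrow> 'y::finite \<Rightarrow> real) \<Rightarrow> real \<Rightarrow> ('x \<Rightarrow> 'x \<Rightarrow> complex) \<Rightarrow> bool" where
  "orth_rep W \<rho> \<psi> \<longleftrightarrow> (\<forall>x. unit_vec (\<psi> x)) \<and>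
     (\<forall>x x'. cmod (cinner (\<psi> x) (\<psi> x')) \<le> bhatt W x x' powr (1 / \<rho>))"

definition log_inv :: "real \<Rightarrow> ereal" where
  "log_inv t = (if t = 0 then \<infinity> else ereal (ln (1 / t)))"

definition Vval :: "('x::finite \<Rightarrow> 'x \<Rightarrow> complex) \<Rightarrow> ereal" where
  "Vval \<psi> = (INF f\<in>{f. unit_vec f}. SUP x. log_inv ((cmod (cinner (\<psi> x) f))\<^sup>2))"

definition theta :: "('x::finite \<Rightarrow> 'y::finite \<Rightarrow> real) \<Rightarrow> real \<Rightarrow> ereal" where
  "theta W \<rho> = (INF \<psi>\<in>{\<psi>. orth_rep W \<rho> \<psi>}. Vval \<psi>)"

definition chernoff :: "('x \<Rightarrow> 'y::finite \<Rightarrow> real) \<Rightarrow> 'x \<Rightarrow> 'x \<Rightarrow> real \<Rightarrow> real" where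
  "chernoff W x x' s = (\<Sum>y\<in>UNIV. W x y powr (1 - s) * W x' y powr s)"

definition pairwise_reversible :: "('x \<Rightarrow> 'y::finite \<Rightarrow> real) \<Rightarrow> bool" where
  "pairwise_reversible W \<longleftrightarrow>
     (\<forall>x x'. \<forall>s\<in>{0..1}. chernoff W x x' (1/2) \<le> chernoff W x x' s)"

end

(*
  Fix an orthonormal representation psi of degree rho and a unit vector f with
  |<psi x, f>|^2 >= exp (-V) for every input x, where V > theta(rho) is close to theta(rho).
  For a code of rate R > V the tensor products psi^(n) of the M >= 2 exp (n V) codewords all
  have inner product at least exp (-n V / 2) with f^(n); comparing this with the row sums of
  their Gram matrix yields two codewords whose tensor products have inner product at least
  exp (-n V) / 2.  Since |<psi x, psi x'>| <= <sqrt W(.|x), sqrt W(.|x')>^(1/rho), these two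
  codewords have Bhattacharyya coefficient B >= (exp (-n V) / 2)^rho.

  Two messages cannot both be decoded well: B^2 <= 2 * sum_y min (P y, Q y), which is at most
  the sum of their error probabilities, so P_e,max >= B^2 / 4 and E(R) <= 2 rho V.  For a
  pairwise reversible channel the derivative of the Chernoff function vanishes at s = 1/2, so
  the log-likelihood ratio has mean zero under the tilted distribution sqrt (P Q) / B.  By
  Chebyshev's inequality it is O(sqrt n) with probability 1/2, and min (P, Q) >=
  sqrt (P Q) exp (-|llr| / 2) gives P_e,max >= B exp (-O(sqrt n)), hence E(R) <= rho V.
*)
theory Submission
  imports Defs "HOL-Real_Asymp.Real_Asymp"
begin

definition words :: "nat \<Rightarrow> 'a list set" where
  "words n = {ys. length ys = n}"

lemma finite_words [simp]: "finite (words n :: 'a::finite list set)"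
  using finite_lists_length_eq[of "UNIV :: 'a set" n] by (simp add: words_def)

lemma words_0 [simp]: "words 0 = {[]}"
  by (auto simp: words_def)

lemma sum_words_Suc:
  "(\<Sum>ys\<in>words (Suc n). g ys) = (\<Sum>y\<in>(UNIV :: 'a::finite set). \<Sum>ys\<in>words n. g (y # ys))"
proof -
  have words_Suc: "words (Suc n) = case_prod (#) ` (UNIV \<times> words n)"
    by (auto simp: words_def length_Suc_conv)
  have inj: "inj_on (case_prod (#)) (UNIV \<times> words n :: ('a \<times> 'a list) set)"
    by (auto simp: inj_on_def)
  show ?thesis
    unfolding words_Suc sum.reindex[OF inj] by (simp add: sum.cartesian_product case_prod_unfold)
qed

lemma sum_words_prod:
  fixes F :: "nat \<Rightarrow> 'a::finite \<Rightarrow> 'b::comm_semiring_1"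
  shows "(\<Sum>ys\<in>words n. \<Prod>i<n. F i (ys ! i)) = (\<Prod>i<n. \<Sum>y\<in>UNIV. F i y)"
proof (induction n arbitrary: F)
  case (Suc n)
  have "(\<Sum>ys\<in>words (Suc n). \<Prod>i<Suc n. F i (ys ! i))
      = (\<Sum>y\<in>UNIV. F 0 y * (\<Sum>ys\<in>words n. \<Prod>i<n. F (Suc i) (ys ! i)))"
    by (simp only: sum_words_Suc prod.lessThan_Suc_shift nth_Cons_0 nth_Cons_Suc sum_distrib_left)
  also have "\<dots> = (\<Sum>y\<in>UNIV. F 0 y) * (\<Prod>i<n. \<Sum>y\<in>UNIV. F (Suc i) y)"
    by (simp add: Suc.IH[of "\<lambda>i. F (Suc i)"] sum_distrib_right)
  also have "\<dots> = (\<Prod>i<Suc n. \<Sum>y\<in>UNIV. F i y)"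
    by (simp only: prod.lessThan_Suc_shift)
  finally show ?case .
qed simp

lemma sum_words_prod_mult_nth_nth:
  fixes q f g :: "nat \<Rightarrow> 'a::finite \<Rightarrow> 'b::comm_semiring_1"
  assumes "i < n" "j < n"
  shows "(\<Sum>ys\<in>words n. (\<Prod>k<n. q k (ys ! k)) * (f i (ys ! i) * g j (ys ! j)))
       = (\<Prod>k<n. \<Sum>y\<in>UNIV. q k y * (if k = i then f k y else 1) * (if k = j then g k y else 1))"
proof -
  have "(\<Prod>k<n. q k (ys ! k)) * (f i (ys ! i) * g j (ys ! j))
      = (\<Prod>k<n. q k (ys ! k) * (if k = i then f k (ys ! k) else 1) * (if k = j then g k (ys ! k) else 1))"
    for ys
    using assms by (simp add: prod.distrib prod.delta' mult.assoc cong: if_cong)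
  then show ?thesis
    by (simp only: sum_words_prod[where F = "\<lambda>k y. q k y * (if k = i then f k y else 1) * (if k = j then g k y else 1)"])
qed

lemma sum_words_prod_cross_moment:
  fixes q l :: "nat \<Rightarrow> 'a::finite \<Rightarrow> real"
  assumes "\<And>k. k < n \<Longrightarrow> (\<Sum>y\<in>UNIV. q k y) = 1"
    and "\<And>k. k < n \<Longrightarrow> (\<Sum>y\<in>UNIV. q k y * l k y) = 0"
    and "i < n" "j < n"
  shows "(\<Sum>ys\<in>words n. (\<Prod>k<n. q k (ys ! k)) * (l i (ys ! i) * l j (ys ! j)))
       = (if i = j then \<Sum>y\<in>UNIV. q i y * (l i y)\<^sup>2 else 0)"
proof -
  have "(\<Sum>ys\<in>words n. (\<Prod>k<n. q k (ys ! k)) * (l i (ys ! i) * l j (ys ! j)))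
      = (\<Prod>k<n. \<Sum>y\<in>UNIV. q k y * (if k = i then l k y else 1) * (if k = j then l k y else 1))"
    by (rule sum_words_prod_mult_nth_nth[OF assms(3,4)])
  also have "\<dots> = (if i = j then \<Sum>y\<in>UNIV. q i y * (l i y)\<^sup>2 else 0)"
  proof (cases "i = j")
    case True
    have "(\<Prod>k<n. \<Sum>y\<in>UNIV. q k y * (if k = i then l k y else 1) * (if k = i then l k y else 1))
        = (\<Prod>k<n. if k = i then \<Sum>y\<in>UNIV. q i y * (l i y)\<^sup>2 else 1)"
      using assms(1) by (intro prod.cong refl) (simp add: power2_eq_square mult.assoc)
    then show ?thesis
      using assms(3) True by (simp add: prod.delta')
  next
    case False
    have "(\<Sum>y\<in>UNIV. q i y * (if i = i then l i y else 1) * (if i = j then l i y else 1)) = 0"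
      using assms(2)[OF \<open>i < n\<close>] False by simp
    then have "(\<Prod>k<n. \<Sum>y\<in>UNIV. q k y * (if k = i then l k y else 1) * (if k = j then l k y else 1)) = 0"
      using assms(3) by (intro prod_zero bexI[of _ i]) auto
    then show ?thesis
      using False by simp
  qed
  finally show ?thesis .
qed

lemma sum_words_prod_sum_sq:
  fixes q l :: "nat \<Rightarrow> 'a::finite \<Rightarrow> real"
  assumes "\<And>k. k < n \<Longrightarrow> (\<Sum>y\<in>UNIV. q k y) = 1"
    and "\<And>k. k < n \<Longrightarrow> (\<Sum>y\<in>UNIV. q k y * l k y) = 0"
  shows "(\<Sum>ys\<in>words n. (\<Prod>k<n. q k (ys ! k)) * (\<Sum>i<n. l i (ys ! i))\<^sup>2)
       = (\<Sum>i<n. \<Sum>y\<in>UNIV. q i y * (l i y)\<^sup>2)"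
proof -
  have "(\<Sum>ys\<in>words n. (\<Prod>k<n. q k (ys ! k)) * (\<Sum>i<n. l i (ys ! i))\<^sup>2)
      = (\<Sum>ys\<in>words n. \<Sum>i<n. \<Sum>j<n. (\<Prod>k<n. q k (ys ! k)) * (l i (ys ! i) * l j (ys ! j)))"
    unfolding power2_eq_square sum_product by (simp only: sum_distrib_left)
  also have "\<dots> = (\<Sum>i<n. \<Sum>j<n. \<Sum>ys\<in>words n. (\<Prod>k<n. q k (ys ! k)) * (l i (ys ! i) * l j (ys ! j)))"
    by (subst sum.swap) (rule sum.cong[OF refl], rule sum.swap)
  also have "\<dots> = (\<Sum>i<n. \<Sum>j<n. if i = j then \<Sum>y\<in>UNIV. q i y * (l i y)\<^sup>2 else 0)"
    using assms by (intro sum.cong refl) (simp add: sum_words_prod_cross_moment)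
  finally show ?thesis
    by simp
qed

lemma Wn_nonneg: "channel W \<Longrightarrow> 0 \<le> Wn W xs ys"
  unfolding Wn_def channel_def by (auto intro: prod_nonneg)

lemma sum_Wn:
  assumes "channel W" "length xs = n"
  shows "(\<Sum>ys\<in>words n. Wn W xs ys) = 1"
  using assms sum_words_prod[of "\<lambda>i y. W (xs ! i) y" n] by (simp add: Wn_def channel_def)

lemma bhatt_nonneg: "channel W \<Longrightarrow> 0 \<le> bhatt W a b"
  unfolding bhatt_def channel_def by (auto intro!: sum_nonneg)

lemma real_sqrt_prod: "sqrt (prod f A) = (\<Prod>a\<in>A. sqrt (f a))"
  by (induction A rule: infinite_finite_induct) (auto simp: real_sqrt_mult)

lemma sum_sqrt_Wn_eq_prod_bhatt:
  assumes "length xs = n" "length xs' = n"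
  shows "(\<Sum>ys\<in>words n. sqrt (Wn W xs ys * Wn W xs' ys)) = (\<Prod>i<n. bhatt W (xs ! i) (xs' ! i))"
proof -
  have "sqrt (Wn W xs ys * Wn W xs' ys) = (\<Prod>i<n. sqrt (W (xs ! i) (ys ! i) * W (xs' ! i) (ys ! i)))" for ys
    using assms by (simp add: Wn_def prod.distrib[symmetric] real_sqrt_prod)
  then show ?thesis
    using sum_words_prod[where F = "\<lambda>i y. sqrt (W (xs ! i) y * W (xs' ! i) y)"]
    by (simp add: bhatt_def)
qed

definition inner_on :: "'z set \<Rightarrow> ('z \<Rightarrow> complex) \<Rightarrow> ('z \<Rightarrow> complex) \<Rightarrow> complex" where
  "inner_on Z u v = (\<Sum>z\<in>Z. cnj (u z) * v z)"

lemma cinner_eq_inner_on: "cinner u v = inner_on UNIV u v"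
  unfolding cinner_def inner_on_def ..

lemma inner_on_self: "inner_on Z u u = of_real (\<Sum>z\<in>Z. (cmod (u z))\<^sup>2)"
  unfolding inner_on_def of_real_sum by (intro sum.cong refl) (metis complex_norm_square mult.commute)

lemma norm_inner_on_sq_le:
  "(cmod (inner_on Z u v))\<^sup>2 \<le> (\<Sum>z\<in>Z. (cmod (u z))\<^sup>2) * (\<Sum>z\<in>Z. (cmod (v z))\<^sup>2)"
proof -
  have "cmod (inner_on Z u v) \<le> (\<Sum>z\<in>Z. cmod (u z) * cmod (v z))"
    unfolding inner_on_def by (rule order.trans[OF norm_sum]) (simp add: norm_mult)
  then have "(cmod (inner_on Z u v))\<^sup>2 \<le> (\<Sum>z\<in>Z. cmod (u z) * cmod (v z))\<^sup>2"
    by (simp add: power_mono)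
  also have "\<dots> \<le> (\<Sum>z\<in>Z. (cmod (u z))\<^sup>2) * (\<Sum>z\<in>Z. (cmod (v z))\<^sup>2)"
    by (rule Cauchy_Schwarz_ineq_sum)
  finally show ?thesis .
qed

lemma inner_on_sum_left:
  "inner_on Z (\<lambda>z. \<Sum>m\<in>A. a m * v m z) w = (\<Sum>m\<in>A. cnj (a m) * inner_on Z (v m) w)"
  unfolding inner_on_def cnj_sum sum_distrib_right sum_distrib_left
  by (subst sum.swap) (simp add: mult.assoc)

lemma inner_on_sum_right:
  "inner_on Z w (\<lambda>z. \<Sum>m\<in>A. a m * v m z) = (\<Sum>m\<in>A. a m * inner_on Z w (v m))"
  unfolding inner_on_def sum_distrib_left
  by (subst sum.swap) (simp add: mult.left_commute)

lemma cnj_sgn_mult_self: "cnj (sgn z) * z = of_real (cmod z)"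
proof (cases "z = 0")
  case False
  have "cnj (sgn z) * z = (z * cnj z) / of_real (cmod z)"
    by (simp add: sgn_div_norm scaleR_conv_of_real divide_inverse mult_ac)
  also have "\<dots> = of_real (cmod z)"
    using False by (simp flip: complex_norm_square add: power2_eq_square)
  finally show ?thesis .
qed simp

lemma sum_norm_inner_on_sq_le:
  fixes v :: "'m \<Rightarrow> 'z \<Rightarrow> complex"
  shows "(\<Sum>m\<in>A. cmod (inner_on Z (v m) F))\<^sup>2
           \<le> (\<Sum>z\<in>Z. (cmod (F z))\<^sup>2) * (\<Sum>m\<in>A. \<Sum>m'\<in>A. cmod (inner_on Z (v m) (v m')))"
proof -
  define g where "g m = inner_on Z (v m) F" for m
  define u where "u z = (\<Sum>m\<in>A. sgn (g m) * v m z)" for z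
  have "inner_on Z u F = of_real (\<Sum>m\<in>A. cmod (g m))"
    unfolding u_def inner_on_sum_left by (simp add: g_def cnj_sgn_mult_self)
  then have g_sum: "(\<Sum>m\<in>A. cmod (g m))\<^sup>2 = (cmod (inner_on Z u F))\<^sup>2"
    by (simp add: sum_nonneg del: of_real_sum)
  have "(\<Sum>z\<in>Z. (cmod (u z))\<^sup>2) \<le> (\<Sum>m\<in>A. \<Sum>m'\<in>A. cmod (inner_on Z (v m) (v m')))"
  proof -
    have "inner_on Z u u = (\<Sum>m\<in>A. \<Sum>m'\<in>A. (cnj (sgn (g m)) * sgn (g m')) * inner_on Z (v m) (v m'))"
      unfolding u_def inner_on_sum_left inner_on_sum_right by (simp add: sum_distrib_left mult.assoc)
    then have "cmod (inner_on Z u u)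
        \<le> (\<Sum>m\<in>A. \<Sum>m'\<in>A. cmod (cnj (sgn (g m)) * sgn (g m')) * cmod (inner_on Z (v m) (v m')))"
      by (simp only:) (rule order.trans[OF norm_sum sum_mono], rule order.trans[OF norm_sum sum_mono], simp add: norm_mult)
    also have "\<dots> \<le> (\<Sum>m\<in>A. \<Sum>m'\<in>A. cmod (inner_on Z (v m) (v m')))"
      by (intro sum_mono mult_left_le_one_le) (auto simp: norm_mult norm_sgn mult_le_one)
    finally show ?thesis
      unfolding inner_on_self norm_of_real by (simp add: sum_nonneg)
  qed
  then have "(cmod (inner_on Z u F))\<^sup>2
      \<le> (\<Sum>z\<in>Z. (cmod (F z))\<^sup>2) * (\<Sum>m\<in>A. \<Sum>m'\<in>A. cmod (inner_on Z (v m) (v m')))"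
    using norm_inner_on_sq_le[of Z u F] by (simp add: mult.commute mult_left_mono sum_nonneg order_trans)
  then show ?thesis
    by (simp add: g_sum[unfolded g_def])
qed

lemma exists_pair_large_inner_on:
  fixes v :: "nat \<Rightarrow> 'z \<Rightarrow> complex"
  assumes unit: "\<And>m. m < M \<Longrightarrow> (\<Sum>z\<in>Z. (cmod (v m z))\<^sup>2) = 1"
    and unit_F: "(\<Sum>z\<in>Z. (cmod (F z))\<^sup>2) = 1"
    and close: "\<And>m. m < M \<Longrightarrow> s \<le> cmod (inner_on Z (v m) F)"
    and many: "2 \<le> real M * s\<^sup>2" and "0 \<le> s"
  shows "\<exists>m<M. \<exists>m'<M. m \<noteq> m' \<and> s\<^sup>2 / 2 \<le> cmod (inner_on Z (v m) (v m'))"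
proof (rule ccontr)
  assume "\<not> ?thesis"
  then have far: "cmod (inner_on Z (v m) (v m')) \<le> s\<^sup>2 / 2" if "m < M" "m' < M" "m \<noteq> m'" for m m'
    using that by force
  have row: "(\<Sum>m'<M. cmod (inner_on Z (v m) (v m'))) \<le> 1 + (real M - 1) * (s\<^sup>2 / 2)" if "m < M" for m
  proof -
    have "(\<Sum>m'<M. cmod (inner_on Z (v m) (v m')))
        = cmod (inner_on Z (v m) (v m)) + (\<Sum>m'\<in>{..<M} - {m}. cmod (inner_on Z (v m) (v m')))"
      using that by (simp add: sum.remove)
    also have "\<dots> \<le> 1 + (\<Sum>m'\<in>{..<M} - {m}. s\<^sup>2 / 2)"
      using that unit far by (intro add_mono sum_mono) (auto simp: inner_on_self)
    finally show ?thesis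
      using that by (simp add: of_nat_diff)
  qed
  have "0 < real M" "0 < s\<^sup>2"
    using many by (auto intro!: Nat.gr0I)
  have "(real M * s)\<^sup>2 \<le> (\<Sum>m<M. cmod (inner_on Z (v m) F))\<^sup>2"
    using close \<open>0 \<le> s\<close> sum_mono[of "{..<M}" "\<lambda>_. s" "\<lambda>m. cmod (inner_on Z (v m) F)"]
    by (intro power_mono) auto
  also have "\<dots> \<le> (\<Sum>m<M. \<Sum>m'<M. cmod (inner_on Z (v m) (v m')))"
    using sum_norm_inner_on_sq_le[where A = "{..<M}" and Z = Z and v = v and F = F] unit_F by simp
  also have "\<dots> \<le> real M * (1 + (real M - 1) * (s\<^sup>2 / 2))"
    using sum_mono[of "{..<M}", OF row] by simp
  also have "\<dots> < real M * (real M * s\<^sup>2)"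
    using many \<open>0 < real M\<close> \<open>0 < s\<^sup>2\<close> by (intro mult_strict_left_mono) (simp_all only: left_diff_distrib)
  finally show False
    by (simp add: power_mult_distrib power2_eq_square mult_ac)
qed

definition tensor :: "nat \<Rightarrow> (nat \<Rightarrow> 'z \<Rightarrow> complex) \<Rightarrow> 'z list \<Rightarrow> complex" where
  "tensor n u zs = (\<Prod>i<n. u i (zs ! i))"

lemma inner_on_tensor:
  fixes u v :: "nat \<Rightarrow> 'z::finite \<Rightarrow> complex"
  shows "inner_on (words n) (tensor n u) (tensor n v) = (\<Prod>i<n. cinner (u i) (v i))"
  unfolding inner_on_def tensor_def cinner_def cnj_prod prod.distrib[symmetric]
  by (rule sum_words_prod[where F = "\<lambda>i z. cnj (u i z) * v i z"])

lemma sum_norm_tensor_sq: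
  fixes u :: "nat \<Rightarrow> 'z::finite \<Rightarrow> complex"
  shows "(\<Sum>zs\<in>words n. (cmod (tensor n u zs))\<^sup>2) = (\<Prod>i<n. \<Sum>z\<in>UNIV. (cmod (u i z))\<^sup>2)"
  unfolding tensor_def prod_norm[symmetric] prod_power_distrib
  by (rule sum_words_prod[where F = "\<lambda>i z. (cmod (u i z))\<^sup>2"])

lemma norm_inner_on_tensor_le_bhatt:
  fixes \<psi> :: "'x::finite \<Rightarrow> 'x \<Rightarrow> complex" and W :: "'x \<Rightarrow> 'y::finite \<Rightarrow> real"
  assumes "channel W" "orth_rep W \<rho> \<psi>" "length xs = n" "length xs' = n"
  shows "cmod (inner_on (words n) (tensor n (\<lambda>i. \<psi> (xs ! i))) (tensor n (\<lambda>i. \<psi> (xs' ! i))))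
           \<le> (\<Sum>ys\<in>words n. sqrt (Wn W xs ys * Wn W xs' ys)) powr (1 / \<rho>)"
proof -
  have "cmod (inner_on (words n) (tensor n (\<lambda>i. \<psi> (xs ! i))) (tensor n (\<lambda>i. \<psi> (xs' ! i))))
      = (\<Prod>i<n. cmod (cinner (\<psi> (xs ! i)) (\<psi> (xs' ! i))))"
    unfolding inner_on_tensor by (simp add: prod_norm)
  also have "\<dots> \<le> (\<Prod>i<n. bhatt W (xs ! i) (xs' ! i) powr (1 / \<rho>))"
    using assms(2) unfolding orth_rep_def by (intro prod_mono) auto
  also have "\<dots> = (\<Sum>ys\<in>words n. sqrt (Wn W xs ys * Wn W xs' ys)) powr (1 / \<rho>)"
    using bhatt_nonneg[OF \<open>channel W\<close>]
    by (simp add: prod_powr_distrib sum_sqrt_Wn_eq_prod_bhatt[OF assms(3,4)])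
  finally show ?thesis .
qed

lemma code_has_pair_with_large_bhatt:
  fixes \<psi> :: "'x::finite \<Rightarrow> 'x \<Rightarrow> complex" and W :: "'x \<Rightarrow> 'y::finite \<Rightarrow> real"
  assumes "channel W" "1 \<le> \<rho>" and rep: "orth_rep W \<rho> \<psi>" and "unit_vec f"
    and close: "\<And>x. a \<le> (cmod (cinner (\<psi> x) f))\<^sup>2" and "0 \<le> a"
    and code: "is_code n M c dec" and many: "2 \<le> real M * a ^ n"
  shows "\<exists>m<M. \<exists>m'<M. m \<noteq> m' \<and>
           (a ^ n / 2) powr \<rho> \<le> (\<Sum>ys\<in>words n. sqrt (Wn W (c m) ys * Wn W (c m') ys))"
proof -
  define v where "v m = tensor n (\<lambda>i. \<psi> (c m ! i))" for m
  have unit_\<psi>: "\<And>x. (\<Sum>z\<in>UNIV. (cmod (\<psi> x z))\<^sup>2) = 1"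
    using rep unfolding orth_rep_def unit_vec_def by blast
  have "sqrt a \<le> cmod (cinner (\<psi> x) f)" for x
    using real_sqrt_le_mono[OF close[of x]] by simp
  then have "sqrt a ^ n \<le> cmod (inner_on (words n) (v m) (tensor n (\<lambda>_. f)))" for m
    unfolding v_def inner_on_tensor prod_norm[symmetric]
    using prod_mono[of "{..<n}" "\<lambda>_. sqrt a"] by (simp add: \<open>0 \<le> a\<close>)
  moreover have sqrt_a: "(sqrt a ^ n)\<^sup>2 = a ^ n"
    using \<open>0 \<le> a\<close> by (simp add: power2_eq_square flip: power_mult_distrib)
  ultimately have "\<exists>m<M. \<exists>m'<M. m \<noteq> m' \<and> (sqrt a ^ n)\<^sup>2 / 2 \<le> cmod (inner_on (words n) (v m) (v m'))"
    using many \<open>unit_vec f\<close> unit_\<psi> \<open>0 \<le> a\<close>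
    by (intro exists_pair_large_inner_on) (auto simp: v_def sum_norm_tensor_sq unit_vec_def)
  then obtain m m' where mm: "m < M" "m' < M" "m \<noteq> m'"
    and large: "a ^ n / 2 \<le> cmod (inner_on (words n) (v m) (v m'))"
    using sqrt_a by auto
  let ?B = "\<Sum>ys\<in>words n. sqrt (Wn W (c m) ys * Wn W (c m') ys)"
  have "length (c m) = n" "length (c m') = n"
    using code mm unfolding is_code_def by auto
  then have "(a ^ n / 2) powr \<rho> \<le> (?B powr (1 / \<rho>)) powr \<rho>"
    using large norm_inner_on_tensor_le_bhatt[OF \<open>channel W\<close> rep] \<open>0 \<le> a\<close> \<open>1 \<le> \<rho>\<close>
    by (intro powr_mono2) (auto simp: v_def intro: order.trans)
  also have "\<dots> = ?B"
    using \<open>1 \<le> \<rho>\<close> by (simp add: powr_powr sum_nonneg Wn_nonneg[OF \<open>channel W\<close>])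
  finally show ?thesis
    using mm by blast
qed

lemma err_prob_le_err_max:
  assumes "is_code n M c dec" "m < M"
  shows "err_prob W n c dec m \<le> err_max W n M c dec"
  unfolding err_max_def using assms by (intro Max_ge) auto

lemma err_prob_eq_sum_words:
  "err_prob W n c dec m = (\<Sum>ys\<in>words n. if dec ys \<noteq> m then Wn W (c m) ys else 0)"
proof -
  have "{ys. length ys = n \<and> dec ys \<noteq> m} = {ys \<in> words n. dec ys \<noteq> m}"
    by (auto simp: words_def)
  then show ?thesis
    by (simp add: err_prob_def sum.inter_filter)
qed

lemma sum_min_Wn_le_err_prob:
  assumes "channel W" "m \<noteq> m'"
  shows "(\<Sum>ys\<in>words n. min (Wn W (c m) ys) (Wn W (c m') ys))
           \<le> err_prob W n c dec m + err_prob W n c dec m'"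
proof -
  have "min (Wn W (c m) ys) (Wn W (c m') ys)
      \<le> (if dec ys \<noteq> m then Wn W (c m) ys else 0) + (if dec ys \<noteq> m' then Wn W (c m') ys else 0)"
    for ys
    using assms Wn_nonneg[OF \<open>channel W\<close>, of "c m" ys] Wn_nonneg[OF \<open>channel W\<close>, of "c m'" ys]
    by auto
  then show ?thesis
    unfolding err_prob_eq_sum_words sum.distrib[symmetric] by (intro sum_mono)
qed

lemma sum_sqrt_mult_sq_le_sum_min:
  fixes P Q :: "'a \<Rightarrow> real"
  assumes "\<And>a. a \<in> A \<Longrightarrow> 0 \<le> P a" "\<And>a. a \<in> A \<Longrightarrow> 0 \<le> Q a"
    and "sum P A = 1" "sum Q A = 1"
  shows "(\<Sum>a\<in>A. sqrt (P a * Q a))\<^sup>2 \<le> 2 * (\<Sum>a\<in>A. min (P a) (Q a))"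
proof -
  have "sqrt (P a * Q a) = sqrt (min (P a) (Q a)) * sqrt (max (P a) (Q a))" for a
    by (simp add: real_sqrt_mult[symmetric] min_def max_def mult.commute)
  then have "(\<Sum>a\<in>A. sqrt (P a * Q a))\<^sup>2
      \<le> (\<Sum>a\<in>A. (sqrt (min (P a) (Q a)))\<^sup>2) * (\<Sum>a\<in>A. (sqrt (max (P a) (Q a)))\<^sup>2)"
    by (simp only: Cauchy_Schwarz_ineq_sum)
  also have "\<dots> = (\<Sum>a\<in>A. min (P a) (Q a)) * (\<Sum>a\<in>A. max (P a) (Q a))"
    using assms by (intro arg_cong2[where f = "(*)"] sum.cong) (auto simp: le_max_iff_disj)
  also have "\<dots> \<le> (\<Sum>a\<in>A. min (P a) (Q a)) * 2"
  proof (rule mult_left_mono)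
    have "(\<Sum>a\<in>A. max (P a) (Q a)) \<le> (\<Sum>a\<in>A. P a + Q a)"
      using assms by (intro sum_mono) auto
    then show "(\<Sum>a\<in>A. max (P a) (Q a)) \<le> 2"
      using assms by (simp add: sum.distrib)
  qed (use assms in \<open>auto intro: sum_nonneg\<close>)
  finally show ?thesis
    by (simp add: mult.commute)
qed

lemma err_max_ge_bhatt_sq:
  assumes "channel W" "is_code n M c dec" "m < M" "m' < M" "m \<noteq> m'"
  shows "(\<Sum>ys\<in>words n. sqrt (Wn W (c m) ys * Wn W (c m') ys))\<^sup>2 / 4 \<le> err_max W n M c dec"
proof -
  have "length (c m) = n" "length (c m') = n"
    using assms unfolding is_code_def by auto
  then have "(\<Sum>ys\<in>words n. sqrt (Wn W (c m) ys * Wn W (c m') ys))\<^sup>2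
      \<le> 2 * (\<Sum>ys\<in>words n. min (Wn W (c m) ys) (Wn W (c m') ys))"
    using assms by (intro sum_sqrt_mult_sq_le_sum_min) (auto simp: Wn_nonneg sum_Wn)
  also have "\<dots> \<le> 2 * (err_prob W n c dec m + err_prob W n c dec m')"
    using sum_min_Wn_le_err_prob[OF \<open>channel W\<close> \<open>m \<noteq> m'\<close>, of c n dec] by simp
  also have "\<dots> \<le> 2 * (err_max W n M c dec + err_max W n M c dec)"
    using assms by (intro mult_left_mono add_mono err_prob_le_err_max) auto
  finally show ?thesis
    by simp
qed

(* Set to 0 where either probability vanishes; there sqrt (W a y * W b y) = 0 anyway. *)
definition llr :: "('x \<Rightarrow> 'y \<Rightarrow> real) \<Rightarrow> 'x \<Rightarrow> 'x \<Rightarrow> 'y \<Rightarrow> real" where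
  "llr W a b y = (if 0 < W a y \<and> 0 < W b y then ln (W a y) - ln (W b y) else 0)"

lemma sqrt_mult_exp_half_ln_ratio:
  fixes A B :: real
  assumes "0 < A" "0 < B"
  shows "sqrt (A * B) * exp ((ln A - ln B) / 2) = A"
proof -
  have "sqrt (A * B) = exp (ln (sqrt (A * B)))"
    using assms by simp
  also have "\<dots> = exp ((ln A + ln B) / 2)"
    using assms by (simp add: ln_sqrt ln_mult)
  finally show ?thesis
    using assms by (simp add: exp_add[symmetric] add_divide_distrib[symmetric])
qed

lemma sqrt_mult_exp_llr_le:
  assumes "channel W"
  shows "sqrt (W a y * W b y) * exp (llr W a b y / 2) \<le> W a y"
    and "sqrt (W a y * W b y) * exp (- llr W a b y / 2) \<le> W b y"
proof -
  have nonneg: "0 \<le> W a y" "0 \<le> W b y"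
    using assms unfolding channel_def by auto
  consider "0 < W a y" "0 < W b y" | "W a y * W b y = 0"
    using nonneg by fastforce
  then have "sqrt (W a y * W b y) * exp (llr W a b y / 2) \<le> W a y \<and>
      sqrt (W a y * W b y) * exp (- llr W a b y / 2) \<le> W b y"
  proof cases
    case 1
    then show ?thesis
      using sqrt_mult_exp_half_ln_ratio[of "W a y" "W b y"] sqrt_mult_exp_half_ln_ratio[of "W b y" "W a y"]
      by (simp add: llr_def mult.commute minus_diff_eq)
  qed (use nonneg in auto)
  then show "sqrt (W a y * W b y) * exp (llr W a b y / 2) \<le> W a y"
    "sqrt (W a y * W b y) * exp (- llr W a b y / 2) \<le> W b y"
    by auto
qed

lemma chernoff_term_has_derivative_half:
  assumes "channel W"
  shows "((\<lambda>s. W a y powr (1 - s) * W b y powr s) has_real_derivative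
           - (sqrt (W a y * W b y) * llr W a b y)) (at (1 / 2))"
proof (cases "0 < W a y \<and> 0 < W b y")
  case True
  have "((\<lambda>s. exp ((1 - s) * ln (W a y) + s * ln (W b y))) has_real_derivative
      exp ((1 - 1 / 2) * ln (W a y) + 1 / 2 * ln (W b y)) * (ln (W b y) - ln (W a y))) (at (1 / 2))"
    by (auto intro!: derivative_eq_intros simp: algebra_simps)
  moreover have "exp ((1 - 1 / 2) * ln (W a y) + 1 / 2 * ln (W b y)) = sqrt (W a y * W b y)"
    using True by (simp add: exp_add real_sqrt_mult ln_sqrt[symmetric])
  ultimately show ?thesis
    using True by (simp add: powr_def exp_add[symmetric] llr_def algebra_simps)
next
  case False
  moreover have "0 \<le> W a y" "0 \<le> W b y"
    using assms unfolding channel_def by auto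
  ultimately have "W a y = 0 \<or> W b y = 0"
    by linarith
  then show ?thesis
    by (auto simp: llr_def)
qed

lemma reversible_sum_sqrt_mult_llr_eq_0:
  assumes "channel W" "pairwise_reversible W"
  shows "(\<Sum>y\<in>UNIV. sqrt (W a y * W b y) * llr W a b y) = 0"
proof -
  have "(\<Sum>y\<in>UNIV. - (sqrt (W a y * W b y) * llr W a b y)) = 0"
  proof (rule DERIV_local_min[OF DERIV_sum[OF chernoff_term_has_derivative_half[OF assms(1)]]])
    show "0 < (1 / 2 :: real)"
      by simp
    show "\<forall>s. \<bar>1 / 2 - s\<bar> < 1 / 2 \<longrightarrow>
        (\<Sum>y\<in>UNIV. W a y powr (1 - 1 / 2) * W b y powr (1 / 2)) \<le> (\<Sum>y\<in>UNIV. W a y powr (1 - s) * W b y powr s)"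
    proof (intro allI impI)
      fix s :: real
      assume "\<bar>1 / 2 - s\<bar> < 1 / 2"
      then have "s \<in> {0..1}"
        by (auto simp: abs_if split: if_split_asm)
      then show "(\<Sum>y\<in>UNIV. W a y powr (1 - 1 / 2) * W b y powr (1 / 2))
          \<le> (\<Sum>y\<in>UNIV. W a y powr (1 - s) * W b y powr s)"
        using assms(2) unfolding pairwise_reversible_def chernoff_def by auto
    qed
  qed
  then show ?thesis
    by (simp add: sum_negf)
qed

(* By x / 0 = 0, tilt vanishes when bhatt W a b = 0; only sum_tilt needs bhatt W a b > 0. *)
definition tilt :: "('x \<Rightarrow> 'y::finite \<Rightarrow> real) \<Rightarrow> 'x \<Rightarrow> 'x \<Rightarrow> 'y \<Rightarrow> real" where
  "tilt W a b y = sqrt (W a y * W b y) / bhatt W a b"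

lemma tilt_nonneg: "channel W \<Longrightarrow> 0 \<le> tilt W a b y"
  using bhatt_nonneg[of W a b] unfolding tilt_def channel_def by simp

lemma sum_tilt: "0 < bhatt W a b \<Longrightarrow> (\<Sum>y\<in>UNIV. tilt W a b y) = 1"
  by (simp add: tilt_def bhatt_def flip: sum_divide_distrib)

lemma reversible_sum_tilt_mult_llr_eq_0:
  assumes "channel W" "pairwise_reversible W"
  shows "(\<Sum>y\<in>UNIV. tilt W a b y * llr W a b y) = 0"
  using reversible_sum_sqrt_mult_llr_eq_0[OF assms, of a b]
  by (simp add: tilt_def sum_divide_distrib[symmetric])

lemma llr_second_moment_bound:
  fixes W :: "'x::finite \<Rightarrow> 'y::finite \<Rightarrow> real"
  assumes "channel W"
  obtains K where "0 < K" "\<And>a b. (\<Sum>y\<in>UNIV. tilt W a b y * (llr W a b y)\<^sup>2) \<le> K"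
proof
  define m where "m a b = (\<Sum>y\<in>UNIV. tilt W a b y * (llr W a b y)\<^sup>2)" for a b
  have m_nonneg: "0 \<le> m a b" for a b
    unfolding m_def by (intro sum_nonneg mult_nonneg_nonneg tilt_nonneg[OF assms]) auto
  show "0 < 1 + (\<Sum>a\<in>UNIV. \<Sum>b\<in>UNIV. m a b)"
    using m_nonneg by (simp add: add_pos_nonneg sum_nonneg)
  fix a b
  have "m a b \<le> (\<Sum>b'\<in>UNIV. m a b')"
    using m_nonneg by (intro member_le_sum) auto
  also have "\<dots> \<le> (\<Sum>a'\<in>UNIV. \<Sum>b'\<in>UNIV. m a' b')"
    using m_nonneg by (intro member_le_sum sum_nonneg) auto
  finally show "(\<Sum>y\<in>UNIV. tilt W a b y * (llr W a b y)\<^sup>2) \<le> 1 + (\<Sum>a\<in>UNIV. \<Sum>b\<in>UNIV. m a b)"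
    unfolding m_def by simp
qed

lemma exp_neg_half_mult_le:
  fixes q L \<tau> :: real
  assumes "0 \<le> q" "0 < \<tau>"
  shows "exp (- \<tau> / 2) * (q - q * L\<^sup>2 / \<tau>\<^sup>2) \<le> q * exp (- \<bar>L\<bar> / 2)"
proof (cases "\<bar>L\<bar> \<le> \<tau>")
  case True
  then have "\<bar>L\<bar>\<^sup>2 \<le> \<tau>\<^sup>2"
    by (intro power_mono) auto
  then have "q * L\<^sup>2 \<le> q * \<tau>\<^sup>2"
    using assms(1) by (intro mult_left_mono) auto
  then have "0 \<le> q - q * L\<^sup>2 / \<tau>\<^sup>2" "q - q * L\<^sup>2 / \<tau>\<^sup>2 \<le> q"
    using assms by (simp_all add: field_simps)
  moreover have "exp (- \<tau> / 2) \<le> exp (- \<bar>L\<bar> / 2)"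
    using True by simp
  ultimately have "exp (- \<tau> / 2) * (q - q * L\<^sup>2 / \<tau>\<^sup>2) \<le> exp (- \<bar>L\<bar> / 2) * q"
    by (intro mult_mono) auto
  then show ?thesis
    by (simp add: mult.commute)
next
  case False
  then have "\<tau>\<^sup>2 \<le> \<bar>L\<bar>\<^sup>2"
    using assms(2) by (intro power_mono) auto
  then have "q - q * L\<^sup>2 / \<tau>\<^sup>2 \<le> 0"
    using assms by (simp add: field_simps mult_left_mono)
  then have "exp (- \<tau> / 2) * (q - q * L\<^sup>2 / \<tau>\<^sup>2) \<le> 0"
    by (simp add: mult_nonneg_nonpos)
  also have "0 \<le> q * exp (- \<bar>L\<bar> / 2)"
    using assms(1) by simp
  finally show ?thesis .
qed

lemma sum_mult_exp_neg_abs_ge: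
  fixes Q L :: "'a \<Rightarrow> real"
  assumes "\<And>a. a \<in> A \<Longrightarrow> 0 \<le> Q a" "sum Q A = 1"
    and "(\<Sum>a\<in>A. Q a * (L a)\<^sup>2) \<le> \<tau>\<^sup>2 / 2" "0 < \<tau>"
  shows "exp (- \<tau> / 2) / 2 \<le> (\<Sum>a\<in>A. Q a * exp (- \<bar>L a\<bar> / 2))"
proof -
  have "exp (- \<tau> / 2) / 2 \<le> exp (- \<tau> / 2) * (1 - (\<Sum>a\<in>A. Q a * (L a)\<^sup>2) / \<tau>\<^sup>2)"
    using assms(3,4) by (simp add: field_simps)
  also have "\<dots> = (\<Sum>a\<in>A. exp (- \<tau> / 2) * (Q a - Q a * (L a)\<^sup>2 / \<tau>\<^sup>2))"
    using assms(2)
    by (simp add: sum_distrib_left[symmetric] sum_subtractf sum_divide_distrib[symmetric] right_diff_distrib)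
  also have "\<dots> \<le> (\<Sum>a\<in>A. Q a * exp (- \<bar>L a\<bar> / 2))"
    using assms(1,4) by (intro sum_mono exp_neg_half_mult_le)
  finally show ?thesis .
qed

lemma sqrt_Wn_mult_exp_le_min:
  assumes "channel W" "length xs = n" "length xs' = n"
  shows "sqrt (Wn W xs ys * Wn W xs' ys) * exp (- \<bar>\<Sum>i<n. llr W (xs ! i) (xs' ! i) (ys ! i)\<bar> / 2)
           \<le> min (Wn W xs ys) (Wn W xs' ys)"
proof -
  let ?L = "\<Sum>i<n. llr W (xs ! i) (xs' ! i) (ys ! i)"
  let ?S = "\<lambda>i. sqrt (W (xs ! i) (ys ! i) * W (xs' ! i) (ys ! i))"
  have W_nonneg: "0 \<le> W a y" for a y
    using \<open>channel W\<close> unfolding channel_def by auto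
  have sqrt_Wn: "sqrt (Wn W xs ys * Wn W xs' ys) = (\<Prod>i<n. ?S i)"
    using assms by (simp add: Wn_def prod.distrib[symmetric] real_sqrt_prod)
  have "sqrt (Wn W xs ys * Wn W xs' ys) * exp (?L / 2)
      = (\<Prod>i<n. ?S i * exp (llr W (xs ! i) (xs' ! i) (ys ! i) / 2))"
    by (simp add: sqrt_Wn prod.distrib exp_sum sum_divide_distrib)
  also have "\<dots> \<le> Wn W xs ys"
    unfolding Wn_def \<open>length xs = n\<close>
    by (intro prod_mono conjI sqrt_mult_exp_llr_le[OF \<open>channel W\<close>]) (auto simp: W_nonneg)
  finally have le_Wn: "sqrt (Wn W xs ys * Wn W xs' ys) * exp (?L / 2) \<le> Wn W xs ys" .
  have "sqrt (Wn W xs ys * Wn W xs' ys) * exp (- ?L / 2)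
      = (\<Prod>i<n. ?S i * exp (- llr W (xs ! i) (xs' ! i) (ys ! i) / 2))"
    by (simp add: sqrt_Wn prod.distrib exp_sum sum_divide_distrib sum_negf[symmetric])
  also have "\<dots> \<le> Wn W xs' ys"
    unfolding Wn_def \<open>length xs' = n\<close>
    by (intro prod_mono conjI sqrt_mult_exp_llr_le[OF \<open>channel W\<close>]) (auto simp: W_nonneg)
  finally have le_Wn': "sqrt (Wn W xs ys * Wn W xs' ys) * exp (- ?L / 2) \<le> Wn W xs' ys" .
  have "sqrt (Wn W xs ys * Wn W xs' ys) * exp (- \<bar>?L\<bar> / 2) \<le> sqrt (Wn W xs ys * Wn W xs' ys) * exp (?L / 2)"
    "sqrt (Wn W xs ys * Wn W xs' ys) * exp (- \<bar>?L\<bar> / 2) \<le> sqrt (Wn W xs ys * Wn W xs' ys) * exp (- ?L / 2)"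
    by (intro mult_left_mono; simp add: Wn_nonneg[OF \<open>channel W\<close>])+
  then show ?thesis
    unfolding min.bounded_iff using le_Wn le_Wn' by linarith
qed

lemma prod_bhatt_mult_prod_tilt:
  assumes "\<And>i. i < n \<Longrightarrow> 0 < bhatt W (xs ! i) (xs' ! i)" "length xs = n" "length xs' = n"
  shows "(\<Prod>i<n. bhatt W (xs ! i) (xs' ! i)) * (\<Prod>i<n. tilt W (xs ! i) (xs' ! i) (ys ! i))
           = sqrt (Wn W xs ys * Wn W xs' ys)"
proof -
  have "(\<Prod>i<n. bhatt W (xs ! i) (xs' ! i)) * (\<Prod>i<n. tilt W (xs ! i) (xs' ! i) (ys ! i))
      = (\<Prod>i<n. sqrt (W (xs ! i) (ys ! i) * W (xs' ! i) (ys ! i)))"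
    unfolding prod.distrib[symmetric] using assms(1)
    by (intro prod.cong refl) (simp add: tilt_def less_imp_neq[symmetric])
  also have "\<dots> = sqrt (Wn W xs ys * Wn W xs' ys)"
    using assms(2,3) by (simp add: Wn_def prod.distrib[symmetric] real_sqrt_prod)
  finally show ?thesis .
qed

lemma reversible_tilted_llr_concentration:
  fixes W :: "'x::finite \<Rightarrow> 'y::finite \<Rightarrow> real"
  assumes ch: "channel W" and rev: "pairwise_reversible W" and "0 < K" "0 < n"
    and moment: "\<And>a b. (\<Sum>y\<in>UNIV. tilt W a b y * (llr W a b y)\<^sup>2) \<le> K"
    and bhatt_pos: "\<And>i. i < n \<Longrightarrow> 0 < bhatt W (xs ! i) (xs' ! i)"
  shows "exp (- sqrt (2 * K * real n) / 2) / 2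
           \<le> (\<Sum>ys\<in>words n. (\<Prod>i<n. tilt W (xs ! i) (xs' ! i) (ys ! i))
                * exp (- \<bar>\<Sum>i<n. llr W (xs ! i) (xs' ! i) (ys ! i)\<bar> / 2))"
proof (rule sum_mult_exp_neg_abs_ge)
  define q where "q i y = tilt W (xs ! i) (xs' ! i) y" for i y
  define l where "l i y = llr W (xs ! i) (xs' ! i) y" for i y
  have q_sum: "(\<Sum>y\<in>UNIV. q i y) = 1" if "i < n" for i
    unfolding q_def using bhatt_pos[OF that] by (rule sum_tilt)
  have q_mean: "(\<Sum>y\<in>UNIV. q i y * l i y) = 0" for i
    unfolding q_def l_def by (rule reversible_sum_tilt_mult_llr_eq_0[OF ch rev])
  show "(\<Sum>ys\<in>words n. \<Prod>i<n. tilt W (xs ! i) (xs' ! i) (ys ! i)) = 1"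
    using q_sum sum_words_prod[of q n] by (simp add: q_def)
  have "(\<Sum>ys\<in>words n. (\<Prod>i<n. q i (ys ! i)) * (\<Sum>i<n. l i (ys ! i))\<^sup>2)
      = (\<Sum>i<n. \<Sum>y\<in>UNIV. q i y * (l i y)\<^sup>2)"
    by (rule sum_words_prod_sum_sq[OF q_sum q_mean])
  also have "\<dots> \<le> (sqrt (2 * K * real n))\<^sup>2 / 2"
    using sum_mono[of "{..<n}", OF moment] \<open>0 < K\<close> by (simp add: q_def l_def mult.commute)
  finally show "(\<Sum>ys\<in>words n. (\<Prod>i<n. tilt W (xs ! i) (xs' ! i) (ys ! i))
      * (\<Sum>i<n. llr W (xs ! i) (xs' ! i) (ys ! i))\<^sup>2) \<le> (sqrt (2 * K * real n))\<^sup>2 / 2"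
    by (simp add: q_def l_def)
qed (use assms in \<open>auto intro: prod_nonneg tilt_nonneg\<close>)

lemma sum_min_Wn_ge_reversible:
  fixes W :: "'x::finite \<Rightarrow> 'y::finite \<Rightarrow> real"
  assumes ch: "channel W" and rev: "pairwise_reversible W" and "0 < K"
    and moment: "\<And>a b. (\<Sum>y\<in>UNIV. tilt W a b y * (llr W a b y)\<^sup>2) \<le> K"
    and len: "length xs = n" "length xs' = n" and "0 < n"
  shows "(\<Sum>ys\<in>words n. sqrt (Wn W xs ys * Wn W xs' ys)) * exp (- sqrt (2 * K * real n) / 2) / 2
           \<le> (\<Sum>ys\<in>words n. min (Wn W xs ys) (Wn W xs' ys))"
proof -
  define B where "B = (\<Prod>i<n. bhatt W (xs ! i) (xs' ! i))"
  define L where "L ys = (\<Sum>i<n. llr W (xs ! i) (xs' ! i) (ys ! i))" for ys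
  have B_eq: "(\<Sum>ys\<in>words n. sqrt (Wn W xs ys * Wn W xs' ys)) = B"
    unfolding B_def by (rule sum_sqrt_Wn_eq_prod_bhatt[OF len])
  have "0 \<le> (\<Sum>ys\<in>words n. min (Wn W xs ys) (Wn W xs' ys))"
    by (intro sum_nonneg) (simp add: Wn_nonneg[OF ch])
  moreover have "B * exp (- sqrt (2 * K * real n) / 2) / 2 \<le> (\<Sum>ys\<in>words n. min (Wn W xs ys) (Wn W xs' ys))"
    if "B \<noteq> 0"
  proof -
    have bhatt_pos: "0 < bhatt W (xs ! i) (xs' ! i)" if "i < n" for i
      using \<open>B \<noteq> 0\<close> that bhatt_nonneg[OF ch] unfolding B_def by (force simp: less_le)
    have "0 \<le> B"
      unfolding B_def by (intro prod_nonneg) (simp add: bhatt_nonneg[OF ch])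
    then have "B * (exp (- sqrt (2 * K * real n) / 2) / 2)
        \<le> B * (\<Sum>ys\<in>words n. (\<Prod>i<n. tilt W (xs ! i) (xs' ! i) (ys ! i)) * exp (- \<bar>L ys\<bar> / 2))"
      unfolding L_def
      by (intro mult_left_mono reversible_tilted_llr_concentration[OF ch rev \<open>0 < K\<close> \<open>0 < n\<close> moment bhatt_pos])
    also have "\<dots> = (\<Sum>ys\<in>words n. sqrt (Wn W xs ys * Wn W xs' ys) * exp (- \<bar>L ys\<bar> / 2))"
      unfolding B_def sum_distrib_left mult.assoc[symmetric]
      by (simp add: prod_bhatt_mult_prod_tilt[OF bhatt_pos len])
    also have "\<dots> \<le> (\<Sum>ys\<in>words n. min (Wn W xs ys) (Wn W xs' ys))"
      unfolding L_def by (intro sum_mono sqrt_Wn_mult_exp_le_min[OF ch len])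
    finally show ?thesis
      by simp
  qed
  ultimately show ?thesis
    using B_eq by (cases "B = 0") auto
qed

lemma err_max_ge_bhatt_reversible:
  fixes W :: "'x::finite \<Rightarrow> 'y::finite \<Rightarrow> real"
  assumes "channel W" "pairwise_reversible W" "0 < K"
    and "\<And>a b. (\<Sum>y\<in>UNIV. tilt W a b y * (llr W a b y)\<^sup>2) \<le> K"
    and "is_code n M c dec" "0 < n" "m < M" "m' < M" "m \<noteq> m'"
  shows "(\<Sum>ys\<in>words n. sqrt (Wn W (c m) ys * Wn W (c m') ys)) * exp (- sqrt (2 * K * real n) / 2) / 4
           \<le> err_max W n M c dec"
proof -
  have "length (c m) = n" "length (c m') = n"
    using assms unfolding is_code_def by auto
  then have "(\<Sum>ys\<in>words n. sqrt (Wn W (c m) ys * Wn W (c m') ys)) * exp (- sqrt (2 * K * real n) / 2) / 2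
      \<le> (\<Sum>ys\<in>words n. min (Wn W (c m) ys) (Wn W (c m') ys))"
    using assms by (intro sum_min_Wn_ge_reversible)
  also have "\<dots> \<le> err_prob W n c dec m + err_prob W n c dec m'"
    using assms by (intro sum_min_Wn_le_err_prob)
  also have "\<dots> \<le> err_max W n M c dec + err_max W n M c dec"
    using assms by (intro add_mono err_prob_le_err_max)
  finally show ?thesis
    by simp
qed

lemma two_le_card_mult_exp_pow:
  assumes "is_code n M c dec" "0 < n" "R \<le> ln (real M) / real n" "ln 2 \<le> real n * (R - V)"
  shows "2 \<le> real M * exp (- V) ^ n"
proof -
  have "0 < real M"
    using assms(1) unfolding is_code_def by auto
  moreover have "real n * R \<le> ln (real M)"
    using assms(2,3) by (simp add: field_simps)
  ultimately have "exp (real n * R) \<le> real M"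
    by (metis exp_le_cancel_iff exp_ln)
  have "2 \<le> exp (real n * (R - V))"
    using assms(4) by (metis exp_le_cancel_iff exp_ln zero_less_numeral)
  also have "\<dots> = exp (real n * R) * exp (- V) ^ n"
    by (simp add: exp_of_nat_mult[symmetric] exp_add[symmetric] algebra_simps)
  also have "\<dots> \<le> real M * exp (- V) ^ n"
    using \<open>exp (real n * R) \<le> real M\<close> by (intro mult_right_mono) auto
  finally show ?thesis .
qed

lemma le_opt_err:
  assumes "0 < n"
    and "\<And>M c dec. is_code n M c dec \<Longrightarrow> R \<le> ln (real M) / real n \<Longrightarrow> L \<le> err_max W n M c dec"
  shows "L \<le> opt_err W n R"
  unfolding opt_err_def
proof (rule cInf_greatest)
  define M where "M = nat \<lceil>exp (real n * R)\<rceil> + 1"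
  have "exp (real n * R) \<le> real M"
    unfolding M_def by linarith
  then have "real n * R \<le> ln (real M)"
    by (metis exp_gt_zero ln_exp ln_le_cancel_iff order_less_le_trans)
  then have "R \<le> ln (real M) / real n"
    using \<open>0 < n\<close> by (simp add: field_simps)
  moreover have "is_code n M (\<lambda>_. replicate n undefined) (\<lambda>_. 0)"
    unfolding is_code_def M_def by auto
  ultimately show "{err_max W n M c dec |M c dec. is_code n M c dec \<and> R \<le> ln (real M) / real n} \<noteq> {}"
    by blast
qed (use assms(2) in blast)

lemma reliability_le_of_opt_err_ge:
  assumes bound: "\<And>n. N \<le> n \<Longrightarrow> 0 < n \<Longrightarrow> exp (- (real n * A + g n)) \<le> opt_err W n R"
    and g: "(\<lambda>n. g n / real n) \<longlonglongrightarrow> 0"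
  shows "reliability W R \<le> ereal A"
proof -
  let ?h = "\<lambda>n. if opt_err W n R = 0 then \<infinity> else ereal (- ln (opt_err W n R) / real n)"
  have "eventually (\<lambda>n. ?h n \<le> ereal (A + g n / real n)) sequentially"
    unfolding eventually_sequentially
  proof (intro exI[of _ "max N 1"] allI impI)
    fix n
    assume "max N 1 \<le> n"
    then have "0 < n" "exp (- (real n * A + g n)) \<le> opt_err W n R"
      using bound by auto
    moreover from this have "0 < opt_err W n R"
      by (meson exp_gt_zero less_le_trans)
    ultimately have "- (real n * A + g n) \<le> ln (opt_err W n R)"
      by (simp add: ln_ge_iff)
    then have "- ln (opt_err W n R) / real n \<le> (real n * A + g n) / real n"
      by (intro divide_right_mono) auto
    then show "?h n \<le> ereal (A + g n / real n)"
      using \<open>0 < n\<close> \<open>0 < opt_err W n R\<close> by (simp add: field_simps)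
  qed
  then have "reliability W R \<le> limsup (\<lambda>n. ereal (A + g n / real n))"
    unfolding reliability_def by (rule Limsup_mono)
  also have "\<dots> = ereal A"
    using tendsto_add[OF tendsto_const g, of A] by (intro lim_imp_Limsup) auto
  finally show ?thesis .
qed

lemma reliability_le_of_pair_bound:
  fixes W :: "'x::finite \<Rightarrow> 'y::finite \<Rightarrow> real" and \<psi> :: "'x \<Rightarrow> 'x \<Rightarrow> complex"
  assumes "channel W" "1 \<le> \<rho>" "orth_rep W \<rho> \<psi>" "unit_vec f"
    and close: "\<And>x. exp (- V) \<le> (cmod (cinner (\<psi> x) f))\<^sup>2" and "V < R"
    and pair: "\<And>n M c dec m m'. is_code n M c dec \<Longrightarrow> 0 < n \<Longrightarrow> m < M \<Longrightarrow> m' < M \<Longrightarrow> m \<noteq> m' \<Longrightarrow>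
      (\<Sum>ys\<in>words n. sqrt (Wn W (c m) ys * Wn W (c m') ys)) ^ k * exp (- g n) \<le> err_max W n M c dec"
    and g: "(\<lambda>n. g n / real n) \<longlonglongrightarrow> 0"
  shows "reliability W R \<le> ereal (real k * \<rho> * V)"
proof (rule reliability_le_of_opt_err_ge[where N = "nat \<lceil>ln 2 / (R - V)\<rceil>" and g = "\<lambda>n. real k * \<rho> * ln 2 + g n"])
  show "(\<lambda>n. (real k * \<rho> * ln 2 + g n) / real n) \<longlonglongrightarrow> 0"
    using tendsto_add[OF lim_const_over_n g] by (simp add: add_divide_distrib)
  fix n :: nat
  assume "nat \<lceil>ln 2 / (R - V)\<rceil> \<le> n" "0 < n"
  then have n_large: "ln 2 \<le> real n * (R - V)"
    using \<open>V < R\<close> by (simp add: field_simps)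
  show "exp (- (real n * (real k * \<rho> * V) + (real k * \<rho> * ln 2 + g n))) \<le> opt_err W n R"
  proof (rule le_opt_err[OF \<open>0 < n\<close>])
    fix M and c :: "nat \<Rightarrow> 'x list" and dec :: "'y list \<Rightarrow> nat"
    assume code: "is_code n M c dec" and rate: "R \<le> ln (real M) / real n"
    have "2 \<le> real M * exp (- V) ^ n"
      using code \<open>0 < n\<close> rate n_large by (rule two_le_card_mult_exp_pow)
    then obtain m m' where mm: "m < M" "m' < M" "m \<noteq> m'"
      and large: "(exp (- V) ^ n / 2) powr \<rho> \<le> (\<Sum>ys\<in>words n. sqrt (Wn W (c m) ys * Wn W (c m') ys))"
      using code_has_pair_with_large_bhatt[OF assms(1-4) close _ code] by auto
    have "exp (- V) ^ n / 2 = exp (- (real n * V) - ln 2)"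
      by (simp add: exp_diff exp_of_nat_mult[symmetric])
    then have "(exp (- V) ^ n / 2) powr \<rho> = exp (- (\<rho> * real n * V) - \<rho> * ln 2)"
      by (simp add: exp_powr_real algebra_simps)
    then have "exp (- (real n * (real k * \<rho> * V) + (real k * \<rho> * ln 2 + g n)))
        = ((exp (- V) ^ n / 2) powr \<rho>) ^ k * exp (- g n)"
      by (simp add: exp_of_nat_mult[symmetric] exp_add[symmetric] algebra_simps)
    also have "\<dots> \<le> (\<Sum>ys\<in>words n. sqrt (Wn W (c m) ys * Wn W (c m') ys)) ^ k * exp (- g n)"
      using large by (intro mult_right_mono power_mono) auto
    also have "\<dots> \<le> err_max W n M c dec"
      by (rule pair[OF code \<open>0 < n\<close> mm])
    finally show "exp (- (real n * (real k * \<rho> * V) + (real k * \<rho> * ln 2 + g n))) \<le> err_max W n M c dec" .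
  qed
qed

lemma exp_neg_le_of_log_inv_less:
  assumes "log_inv a < ereal t" "0 \<le> a"
  shows "exp (- t) \<le> a"
proof -
  have "0 < a" "ln (1 / a) < t"
    using assms unfolding log_inv_def by (auto split: if_splits)
  then have "- t < ln a"
    by (simp add: ln_div)
  then show ?thesis
    using ln_ge_iff[OF \<open>0 < a\<close>, of "- t"] by simp
qed

lemma theta_nonneg:
  fixes W :: "'x::finite \<Rightarrow> 'y::finite \<Rightarrow> real"
  shows "0 \<le> theta W \<rho>"
  unfolding theta_def Vval_def
proof (intro INF_greatest)
  fix \<psi> :: "'x \<Rightarrow> 'x \<Rightarrow> complex" and f :: "'x \<Rightarrow> complex"
  assume "\<psi> \<in> {\<psi>. orth_rep W \<rho> \<psi>}" "f \<in> {f. unit_vec f}"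
  then have "(cmod (cinner (\<psi> x) f))\<^sup>2 \<le> 1" for x
    using norm_inner_on_sq_le[of UNIV "\<psi> x" f]
    unfolding orth_rep_def unit_vec_def cinner_eq_inner_on by simp
  then have "0 \<le> log_inv ((cmod (cinner (\<psi> undefined) f))\<^sup>2)"
    by (simp add: log_inv_def)
  also have "\<dots> \<le> (SUP x. log_inv ((cmod (cinner (\<psi> x) f))\<^sup>2))"
    by (rule SUP_upper) simp
  finally show "0 \<le> (SUP x. log_inv ((cmod (cinner (\<psi> x) f))\<^sup>2))" .
qed

lemma le_mult_theta:
  fixes W :: "'x::finite \<Rightarrow> 'y::finite \<Rightarrow> real"
  assumes "0 < k" "theta W \<rho> < ereal R"
    and bound: "\<And>(\<psi> :: 'x \<Rightarrow> 'x \<Rightarrow> complex) f V. orth_rep W \<rho> \<psi> \<Longrightarrow> unit_vec f \<Longrightarrow>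
      (\<And>x. exp (- V) \<le> (cmod (cinner (\<psi> x) f))\<^sup>2) \<Longrightarrow> V < R \<Longrightarrow> E \<le> ereal (k * V)"
  shows "E \<le> ereal k * theta W \<rho>"
proof -
  obtain t where t: "theta W \<rho> = ereal t"
    using theta_nonneg[of W \<rho>] assms(2) by (cases "theta W \<rho>") auto
  have "E \<le> ereal (k * t)"
  proof (rule dense_ge_bounded[of _ "ereal (k * R)"])
    show "ereal (k * t) < ereal (k * R)"
      using assms(1,2) t by simp
    fix w
    assume w: "ereal (k * t) < w" "w < ereal (k * R)"
    then obtain r where "w = ereal r"
      by (cases w) auto
    define v where "v = r / k"
    then have v: "w = ereal (k * v)"
      using \<open>w = ereal r\<close> \<open>0 < k\<close> by simp
    then have "t < v" "v < R"
      using w \<open>0 < k\<close> by auto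
    then have "theta W \<rho> < ereal v"
      using t by simp
    then obtain \<psi> where rep: "orth_rep W \<rho> \<psi>" and "Vval \<psi> < ereal v"
      unfolding theta_def INF_less_iff by auto
    then obtain f where "unit_vec f" and sup_less: "(SUP x. log_inv ((cmod (cinner (\<psi> x) f))\<^sup>2)) < ereal v"
      unfolding Vval_def INF_less_iff by auto
    have "exp (- v) \<le> (cmod (cinner (\<psi> x) f))\<^sup>2" for x
      using SUP_lessD[OF sup_less] by (intro exp_neg_le_of_log_inv_less) auto
    then show "E \<le> w"
      using bound[OF rep \<open>unit_vec f\<close> _ \<open>v < R\<close>] v by blast
  qed
  then show ?thesis
    by (simp add: t)
qed

lemma reliability_le_theta:
  fixes W :: "'x::finite \<Rightarrow> 'y::finite \<Rightarrow> real"
  assumes "channel W" "1 \<le> \<rho>" "theta W \<rho> < ereal R" "0 < k"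
    and "\<And>n M c dec m m'. is_code n M c dec \<Longrightarrow> 0 < n \<Longrightarrow> m < M \<Longrightarrow> m' < M \<Longrightarrow> m \<noteq> m' \<Longrightarrow>
      (\<Sum>ys\<in>words n. sqrt (Wn W (c m) ys * Wn W (c m') ys)) ^ k * exp (- g n) \<le> err_max W n M c dec"
    and "(\<lambda>n. g n / real n) \<longlonglongrightarrow> 0"
  shows "reliability W R \<le> ereal (real k * \<rho>) * theta W \<rho>"
  using assms by (intro le_mult_theta reliability_le_of_pair_bound) auto

lemma reliability_le_two_rho_theta:
  fixes W :: "'x::finite \<Rightarrow> 'y::finite \<Rightarrow> real"
  assumes "channel W" "1 \<le> \<rho>" "theta W \<rho> < ereal R"
  shows "reliability W R \<le> ereal (2 * \<rho>) * theta W \<rho>"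
proof -
  have "reliability W R \<le> ereal (real 2 * \<rho>) * theta W \<rho>"
  proof (rule reliability_le_theta[where g = "\<lambda>_. ln 4", OF assms])
    fix n M m m' and c :: "nat \<Rightarrow> 'x list" and dec :: "'y list \<Rightarrow> nat"
    assume "is_code n M c dec" "m < M" "m' < M" "m \<noteq> m'"
    then show "(\<Sum>ys\<in>words n. sqrt (Wn W (c m) ys * Wn W (c m') ys)) ^ 2 * exp (- ln 4) \<le> err_max W n M c dec"
      using err_max_ge_bhatt_sq[OF \<open>channel W\<close>] by (simp add: exp_minus field_simps)
  qed (simp_all add: lim_const_over_n)
  then show ?thesis
    by simp
qed

lemma reliability_le_rho_theta_of_reversible:
  fixes W :: "'x::finite \<Rightarrow> 'y::finite \<Rightarrow> real"
  assumes "channel W" "1 \<le> \<rho>" "theta W \<rho> < ereal R" "pairwise_reversible W"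
  shows "reliability W R \<le> ereal \<rho> * theta W \<rho>"
proof -
  obtain K where "0 < K" and moment: "\<And>a b. (\<Sum>y\<in>UNIV. tilt W a b y * (llr W a b y)\<^sup>2) \<le> K"
    using llr_second_moment_bound[OF \<open>channel W\<close>] by blast
  have exp_ln4: "exp (- (ln 4 + t / 2)) = exp (- t / 2) / 4" for t :: real
  proof -
    have "- (ln 4 + t / 2) = - t / 2 - ln 4"
      by simp
    then show ?thesis
      by (simp only: exp_diff) simp
  qed
  have "reliability W R \<le> ereal (real 1 * \<rho>) * theta W \<rho>"
  proof (rule reliability_le_theta[where g = "\<lambda>n. ln 4 + sqrt (2 * K * real n) / 2", OF assms(1-3)])
    show "(\<lambda>n. (ln 4 + sqrt (2 * K * real n) / 2) / real n) \<longlonglongrightarrow> 0"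
      using \<open>0 < K\<close> by real_asymp
  qed (use err_max_ge_bhatt_reversible[OF \<open>channel W\<close> \<open>pairwise_reversible W\<close> \<open>0 < K\<close> moment] in
      \<open>simp_all only: exp_ln4 power_one_right times_divide_eq_right\<close>)
  then show ?thesis
    by simp
qed

theorem corollary1:
  fixes W :: "'x::finite \<Rightarrow> 'y::finite \<Rightarrow> real" and \<rho> :: real
  assumes "channel W" and "1 \<le> \<rho>"
  shows "(\<forall>R. ereal R > theta W \<rho> \<longrightarrow> reliability W R \<le> ereal (2 * \<rho>) * theta W \<rho>) \<and>
         (pairwise_reversible W \<longrightarrow>
            (\<forall>R. ereal R > theta W \<rho> \<longrightarrow> reliability W R \<le> ereal \<rho> * theta W \<rho>))"
  using reliability_le_two_rho_theta[OF assms] reliability_le_rho_theta_of_reversible[OF assms]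
  by blast

end
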